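(* Let $a,b,c,d\in\mathbb{Z}$, $h_{1}(x)=ax+b$ and $h_{2}(x)=cx+d$, and suppose (1) $0<a\leq c$, (2) $0\leq b,d$, and (3) $1+\frac{d}{c}>\frac{b}{a}$. Then \[ \left(\frac{1}{h_{2}(1)}\mathbb{K}_{1}^{\infty}\frac{-h_{1}(i)h_{2}(i)}{h_{1}(i)+h_{2}(i+1)}+1\right)^{-1}=\frac{1}{B\left(1+\frac{b}{a},1+\frac{d}{c}-\frac{b}{a}\right)}\int_{0}^{1}\frac{t^{\frac{b}{a}}(1-t)^{\frac{d}{c}-\frac{b}{a}}}{1-\frac{a}{c}t}\,dt. \] In particular, if $a=c>0$ and $d>b$, this expression equals \[ \frac{B\left(1+\frac{b}{a},\frac{d-b}{a}\right)}{B\left(1+\frac{b}{a},1+\frac{d-b}{a}\right)}=\frac{d+a}{d-b}. \]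
   Context: $B(z_{1},z_{2})=\int_{0}^{1}t^{z_{1}-1}(1-t)^{z_{2}-1}\,dt$ is the Beta function. For sequences $\beta_i,\alpha_i$, $\mathbb{K}_{1}^{n}\frac{\beta_{i}}{\alpha_{i}}:=\cfrac{\beta_{1}}{\alpha_{1}+\cfrac{\beta_{2}}{\ddots+\cfrac{\beta_{n}}{\alpha_{n}+0}}}$ and $\mathbb{K}_{1}^{\infty}\frac{\beta_{i}}{\alpha_{i}}:=\lim_{n\to\infty}\mathbb{K}_{1}^{n}\frac{\beta_{i}}{\alpha_{i}}$; here $\beta_i=-h_1(i)h_2(i)$, $\alpha_i=h_1(i)+h_2(i+1)$. *)

theory Defs
  imports "HOL-Analysis.Analysis"
begin

fun cfrac_from :: "(nat \<Rightarrow> real) \<Rightarrow> (nat \<Rightarrow> real) \<Rightarrow> nat \<Rightarrow> nat \<Rightarrow> real" where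
  "cfrac_from beta alpha i 0 = 0"
| "cfrac_from beta alpha i (Suc k) = beta i / (alpha i + cfrac_from beta alpha (Suc i) k)"

definition cfrac_K :: "(nat \<Rightarrow> real) \<Rightarrow> (nat \<Rightarrow> real) \<Rightarrow> nat \<Rightarrow> real" where
  "cfrac_K beta alpha n = cfrac_from beta alpha 1 n"

end

(*
  Write p i = h1 i and q i = h2 i. For positive p, q the continued fraction with partial
  numerators -p i q i and denominators p i + q (i+1) telescopes (Euler): its n-th approximant
  is -q 1 (1 - 1/S n), where S n is the n-th partial sum of the products
  r m = prod_{j<m} p (j+1) / q (j+2). For linear h1, h2 the ratio p (j+1) / q (j+2) equals
  z (x+j)/(x+j+y) with x = 1 + b/a, y = 1 + d/c - b/a, z = a/c, so
  r m = z^m B(x+m, y) / B(x, y). Since B(x+m, y) is the integral of t^(x+m-1) (1-t)^(y-1),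
  monotone convergence sums the geometric series under the integral sign and the limit of
  S n is the integral of t^(x-1) (1-t)^(y-1) / (1 - z t) divided by B(x, y).
  For a = c this integrand is t^(x-1) (1-t)^(y-2), giving a ratio of two Beta values.
*)

theory Submission
  imports Defs
begin

lemma sum_partial_prods_ge_one:
  fixes r :: "nat \<Rightarrow> real"
  assumes "\<And>j. r j \<ge> 0"
  shows "(\<Sum>m\<le>k. \<Prod>j<m. r j) \<ge> 1"
proof -
  have "(\<Sum>m\<le>k. \<Prod>j<m. r j) = 1 + (\<Sum>m<k. \<Prod>j<Suc m. r j)"
    by (simp add: sum.atMost_shift lessThan_Suc_atMost)
  also have "\<dots> \<ge> 1"
    using assms by (simp add: sum_nonneg prod_nonneg)
  finally show ?thesis .
qed

text \<open>Euler's transformation of a series of products into a continued fraction, read backwards.\<close>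

lemma cfrac_from_eq_sum_prod_ratios:
  fixes p q :: "nat \<Rightarrow> real"
  assumes "\<And>j. j \<ge> i \<Longrightarrow> p j > 0" and "\<And>j. j \<ge> i \<Longrightarrow> q j > 0"
  shows "cfrac_from (\<lambda>j. - (p j * q j)) (\<lambda>j. p j + q (Suc j)) i k
           = - q i * (1 - inverse (\<Sum>m\<le>k. \<Prod>j<m. p (i + j) / q (i + j + 1)))"
  using assms
proof (induction k arbitrary: i)
  case 0
  then show ?case by simp
next
  case (Suc k)
  define S where "S = (\<Sum>m\<le>k. \<Prod>j<m. p (Suc i + j) / q (Suc i + j + 1))"
  have pos: "p i > 0" "q i > 0" "q (Suc i) > 0"
    using Suc.prems by auto
  have "S \<ge> 1"
    unfolding S_def using Suc.prems
    by (intro sum_partial_prods_ge_one) (simp add: less_imp_le)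
  have tail: "cfrac_from (\<lambda>j. - (p j * q j)) (\<lambda>j. p j + q (Suc j)) (Suc i) k
                = - q (Suc i) * (1 - inverse S)"
    unfolding S_def using Suc.prems by (intro Suc.IH) auto
  have sum_Suc: "(\<Sum>m\<le>Suc k. \<Prod>j<m. p (i + j) / q (i + j + 1)) = 1 + p i / q (Suc i) * S"
    unfolding S_def sum.atMost_Suc_shift prod.lessThan_Suc_shift sum_distrib_left by simp
  have "q (Suc i) + S * p i > 0"
    using pos \<open>S \<ge> 1\<close> by (simp add: add_pos_pos)
  then show ?case
    unfolding cfrac_from.simps tail sum_Suc
    using pos \<open>S \<ge> 1\<close> by (simp add: field_simps)
qed

lemma Beta_real_pos:
  fixes x y :: real
  assumes "x > 0" and "y > 0"
  shows "Beta x y > 0"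
  using assms by (simp add: Beta_def Gamma_real_pos)

lemma prod_ratio_eq_Beta:
  fixes x y :: real
  assumes "x > 0" and "y > 0"
  shows "(\<Prod>j<m. (x + real j) / (x + real j + y)) = Beta (x + real m) y / Beta x y"
proof (induction m)
  case 0
  then show ?case using Beta_real_pos[OF assms] by simp
next
  case (Suc m)
  have "(x + real m + y) * Beta (x + real m + 1) y = (x + real m) * Beta (x + real m) y"
    using assms by (intro Beta_plus1_left) (auto dest: nonpos_Ints_nonpos)
  then have step: "(x + real m) / (x + real m + y) * Beta (x + real m) y = Beta (x + real (Suc m)) y"
    using assms by (simp add: field_simps add_pos_pos)
  have "(\<Prod>j<Suc m. (x + real j) / (x + real j + y))
          = (x + real m) / (x + real m + y) * (\<Prod>j<m. (x + real j) / (x + real j + y))"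
    by simp
  also have "\<dots> = Beta (x + real (Suc m)) y / Beta x y"
    unfolding Suc step[symmetric] by simp
  finally show ?case .
qed

lemma Beta_div_Beta_plus1_right:
  fixes x y :: real
  assumes "x > 0" and "y > 0"
  shows "Beta x y / Beta x (y + 1) = (x + y) / y"
proof -
  have "(x + y) * Beta x (y + 1) = y * Beta x y"
    using assms(2) by (intro Beta_plus1_right) (auto dest: nonpos_Ints_nonpos)
  then show ?thesis
    using assms Beta_real_pos[of x "y + 1"] by (simp add: field_simps)
qed

lemma incseq_unbounded_imp_filterlim_at_top:
  fixes X :: "nat \<Rightarrow> 'a::linorder"
  assumes "incseq X" and "\<not> bdd_above (range X)"
  shows "filterlim X at_top sequentially"
  unfolding filterlim_at_top
proof
  fix c
  from assms(2) obtain n0 where "c < X n0"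
    by (auto simp: bdd_above_def not_le)
  then show "eventually (\<lambda>n. c \<le> X n) sequentially"
    using assms(1) by (intro eventually_sequentiallyI[of n0]) (meson incseq_def less_imp_le order.trans)
qed

text \<open>Both limits may be \<open>0\<close>: if the integrals \<open>S n\<close> are unbounded then \<open>f\<close> is not
  integrable and \<^const>\<open>integral\<close> returns its junk value \<open>0\<close>. This is exactly the reading the
  theorem needs when the continued fraction converges to \<open>-h2 1\<close>.\<close>

lemma tendsto_inverse_integral_monotone_convergence:
  fixes F :: "nat \<Rightarrow> 'a::euclidean_space \<Rightarrow> real"
  assumes F_integral: "\<And>n. (F n has_integral S n) A"
    and F_mono: "\<And>n x. x \<in> A \<Longrightarrow> F n x \<le> F (Suc n) x"
    and F_tendsto: "\<And>x. x \<in> A \<Longrightarrow> (\<lambda>n. F n x) \<longlonglongrightarrow> f x"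
    and "S 0 > 0"
  shows "(\<lambda>n. inverse (S n)) \<longlonglongrightarrow> inverse (integral A f)"
proof -
  have integral_F: "integral A (F n) = S n" for n
    using F_integral by (rule integral_unique)
  have "incseq S"
    using F_mono by (intro incseq_SucI has_integral_le[OF F_integral F_integral]) auto
  then have S_pos: "S n > 0" for n
    using \<open>S 0 > 0\<close> monoD[of S 0 n] by simp
  show ?thesis
  proof (cases "bdd_above (range S)")
    case True
    then obtain M where "S n \<le> M" for n
      by (auto simp: bdd_above_def)
    then have "bounded (range (\<lambda>n. integral A (F n)))"
      unfolding integral_F bounded_iff using S_pos by (intro exI[of _ M]) (auto simp: less_imp_le)
    then have "(\<lambda>n. integral A (F n)) \<longlonglongrightarrow> integral A f"
      using F_integral F_mono F_tendsto by (intro monotone_convergence_increasing[THEN conjunct2]) auto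
    then have S_tendsto: "S \<longlonglongrightarrow> integral A f"
      unfolding integral_F .
    moreover have "integral A f \<noteq> 0"
      using incseq_le[OF \<open>incseq S\<close> S_tendsto, of 0] S_pos[of 0] by linarith
    ultimately show ?thesis
      by (rule tendsto_inverse)
  next
    case False
    have "\<not> f integrable_on A"
    proof
      assume "f integrable_on A"
      moreover have "F n x \<le> f x" if "x \<in> A" for n x
        using incseq_le[OF incseq_SucI F_tendsto[OF that]] F_mono[OF that] by blast
      ultimately have "S n \<le> integral A f" for n
        using F_integral unfolding integral_F[symmetric] by (intro integral_le) auto
      with False show False
        by (auto simp: bdd_above_def)
    qed
    then have "integral A f = 0"
      by (rule not_integrable_integral)
    moreover have "(\<lambda>n. inverse (S n)) \<longlonglongrightarrow> 0"
      using \<open>incseq S\<close> False by (intro tendsto_inverse_0_at_top incseq_unbounded_imp_filterlim_at_top)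
    ultimately show ?thesis
      by simp
  qed
qed

lemma has_integral_Beta_geometric_partial_sum:
  fixes x y z :: real
  assumes "x > 0" and "y > 0"
  shows "((\<lambda>t. \<Sum>m\<le>n. z ^ m * (t powr (x + real m - 1) * (1 - t) powr (y - 1)))
           has_integral (\<Sum>m\<le>n. z ^ m * Beta (x + real m) y)) {0..1}"
  using assms by (intro has_integral_sum has_integral_mult_right has_integral_Beta_real) auto

lemma Beta_geometric_integrand_sums:
  fixes x y z t :: real
  assumes "0 \<le> z" and "z \<le> 1" and "t \<in> {0..1}"
  shows "(\<lambda>m. z ^ m * (t powr (x + real m - 1) * (1 - t) powr (y - 1)))
           sums (t powr (x - 1) * (1 - t) powr (y - 1) / (1 - z * t))"
proof -
  consider "t = 0" | "t = 1" | "0 < t" "t < 1"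
    using assms(3) by fastforce
  then show ?thesis
  proof cases
    case 3
    have "z * t < 1"
      using 3 assms(1,2) mult_left_le_one_le[of t z] by linarith
    then have "(\<lambda>m. (z * t) ^ m) sums (1 / (1 - z * t))"
      using 3 assms(1) by (intro geometric_sums) simp
    then have "(\<lambda>m. t powr (x - 1) * (1 - t) powr (y - 1) * (z * t) ^ m)
                 sums (t powr (x - 1) * (1 - t) powr (y - 1) * (1 / (1 - z * t)))"
      by (rule sums_mult)
    moreover have "t powr (x + real m - 1) = t powr (x - 1) * t ^ m" for m
      using 3 unfolding add.commute[of x] add_diff_eq[symmetric] powr_add by (simp add: powr_realpow)
    ultimately show ?thesis
      by (simp add: power_mult_distrib mult_ac)
  qed simp_all
qed

lemma tendsto_inverse_Beta_geometric_partial_sums: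
  fixes x y z :: real
  assumes "x > 0" and "y > 0" and "0 \<le> z" and "z \<le> 1"
  shows "(\<lambda>n. inverse (\<Sum>m\<le>n. z ^ m * Beta (x + real m) y))
           \<longlonglongrightarrow> inverse (integral {0..1} (\<lambda>t. t powr (x - 1) * (1 - t) powr (y - 1) / (1 - z * t)))"
proof (rule tendsto_inverse_integral_monotone_convergence)
  show "((\<lambda>t. \<Sum>m\<le>n. z ^ m * (t powr (x + real m - 1) * (1 - t) powr (y - 1)))
           has_integral (\<Sum>m\<le>n. z ^ m * Beta (x + real m) y)) {0..1}" for n
    using assms(1,2) by (rule has_integral_Beta_geometric_partial_sum)
  show "(\<lambda>n. \<Sum>m\<le>n. z ^ m * (t powr (x + real m - 1) * (1 - t) powr (y - 1)))
          \<longlonglongrightarrow> t powr (x - 1) * (1 - t) powr (y - 1) / (1 - z * t)" if "t \<in> {0..1}" for t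
    using Beta_geometric_integrand_sums[OF assms(3,4) that] by (simp add: sums_def_le)
  show "(\<Sum>m\<le>n. z ^ m * (t powr (x + real m - 1) * (1 - t) powr (y - 1)))
          \<le> (\<Sum>m\<le>Suc n. z ^ m * (t powr (x + real m - 1) * (1 - t) powr (y - 1)))" if "t \<in> {0..1}" for n t
    using that assms(3) by simp
qed (use assms in \<open>simp add: Beta_real_pos\<close>)

lemma integral_Beta_div_one_minus:
  fixes x y :: real
  assumes "x > 0" and "y > 1"
  shows "integral {0..1} (\<lambda>t. t powr (x - 1) * (1 - t) powr (y - 1) / (1 - t)) = Beta x (y - 1)"
proof -
  have "t powr (x - 1) * (1 - t) powr (y - 1) / (1 - t) = t powr (x - 1) * (1 - t) powr (y - 1 - 1)"
    if "t \<in> {0..1}" for t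
    using that by (cases "t = 1") (simp_all add: powr_diff power2_eq_square)
  then have "integral {0..1} (\<lambda>t. t powr (x - 1) * (1 - t) powr (y - 1) / (1 - t))
               = integral {0..1} (\<lambda>t. t powr (x - 1) * (1 - t) powr (y - 1 - 1))"
    by (rule integral_cong)
  also have "\<dots> = Beta x (y - 1)"
    using assms by (intro integral_unique has_integral_Beta_real) auto
  finally show ?thesis .
qed

lemma cfrac_K_tendsto_Beta_integral:
  fixes p q :: "nat \<Rightarrow> real" and x y z :: real
  assumes p_pos: "\<And>i. i \<ge> 1 \<Longrightarrow> p i > 0" and q_pos: "\<And>i. i \<ge> 1 \<Longrightarrow> q i > 0"
    and "x > 0" and "y > 0" and "0 \<le> z" and "z \<le> 1"
    and ratio: "\<And>j. p (Suc j) / q (Suc (Suc j)) = z * ((x + real j) / (x + real j + y))"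
  shows "(\<lambda>n. cfrac_K (\<lambda>i. - (p i * q i)) (\<lambda>i. p i + q (Suc i)) n)
           \<longlonglongrightarrow> - q 1 * (1 - Beta x y * inverse (integral {0..1}
                 (\<lambda>t. t powr (x - 1) * (1 - t) powr (y - 1) / (1 - z * t))))"
proof -
  have prod: "(\<Prod>j<m. p (Suc j) / q (Suc (Suc j))) = z ^ m * Beta (x + real m) y / Beta x y" for m
    unfolding ratio prod.distrib prod_ratio_eq_Beta[OF \<open>x > 0\<close> \<open>y > 0\<close>] by simp
  have K_eq: "cfrac_K (\<lambda>i. - (p i * q i)) (\<lambda>i. p i + q (Suc i)) n
          = - q 1 * (1 - inverse (\<Sum>m\<le>n. \<Prod>j<m. p (Suc j) / q (Suc (Suc j))))" for n
    using cfrac_from_eq_sum_prod_ratios[of 1 p q] p_pos q_pos by (simp add: cfrac_K_def)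
  have inverse_div: "inverse (s / Beta x y) = Beta x y * inverse s" for s
    by (simp add: inverse_divide divide_inverse mult.commute)
  show ?thesis
    unfolding K_eq prod sum_divide_distrib[symmetric] inverse_div
    by (intro tendsto_mult_left tendsto_diff tendsto_const tendsto_mult_left
        tendsto_inverse_Beta_geometric_partial_sums) fact+
qed

lemma linear_cfrac_K_tendsto:
  fixes a b c d :: real
  assumes "0 < a" and "a \<le> c" and "0 \<le> b" and "0 \<le> d" and "b / a < 1 + d / c"
  shows "\<exists>L. (\<lambda>n. cfrac_K (\<lambda>i. - ((a * real i + b) * (c * real i + d)))
                   (\<lambda>i. a * real i + b + (c * (real i + 1) + d)) n) \<longlonglongrightarrow> L
           \<and> inverse (L / (c + d) + 1)
               = 1 / Beta (1 + b / a) (1 + d / c - b / a)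
                 * integral {0..1} (\<lambda>t. t powr (b / a) * (1 - t) powr (d / c - b / a) / (1 - a / c * t))"
proof -
  define x where "x = 1 + b / a"
  define y where "y = 1 + d / c - b / a"
  define z where "z = a / c"
  define I where "I = integral {0..1} (\<lambda>t. t powr (b / a) * (1 - t) powr (d / c - b / a) / (1 - a / c * t))"
  have xyz: "x > 0" "y > 0" "0 \<le> z" "z \<le> 1"
    using assms by (simp_all add: x_def y_def z_def add_pos_nonneg)
  have I_eq: "I = integral {0..1} (\<lambda>t. t powr (x - 1) * (1 - t) powr (y - 1) / (1 - z * t))"
    by (simp add: I_def x_def y_def z_def)
  have ratio: "(a * real (Suc j) + b) / (c * real (Suc (Suc j)) + d) = z * ((x + real j) / (x + real j + y))"
    for j
  proof -
    have "z * (x + real j) = (a * real (Suc j) + b) / c"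
      and "x + real j + y = (c * real (Suc (Suc j)) + d) / c"
      using assms(1,2) by (simp_all add: x_def y_def z_def field_simps)
    then show ?thesis
      using assms(1,2) by (simp only: times_divide_eq_right) simp
  qed
  have "c + d > 0"
    using assms(1,2,4) by simp
  define L where "L = - (c + d) * (1 - Beta x y * inverse I)"
  have "(\<lambda>n. cfrac_K (\<lambda>i. - ((a * real i + b) * (c * real i + d)))
           (\<lambda>i. a * real i + b + (c * real (Suc i) + d)) n)
          \<longlonglongrightarrow> - (c * real 1 + d) * (1 - Beta x y * inverse I)"
    unfolding I_eq using assms xyz ratio
    by (intro cfrac_K_tendsto_Beta_integral) (auto intro!: add_pos_nonneg)
  then have L_tendsto: "(\<lambda>n. cfrac_K (\<lambda>i. - ((a * real i + b) * (c * real i + d)))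
           (\<lambda>i. a * real i + b + (c * (real i + 1) + d)) n) \<longlonglongrightarrow> L"
    by (simp add: L_def add.commute)
  have "L / (c + d) + 1 = Beta x y * inverse I"
    unfolding L_def using \<open>c + d > 0\<close>
    by (simp only: mult_minus_left minus_divide_left nonzero_mult_div_cancel_left) simp
  then have "inverse (L / (c + d) + 1) = 1 / Beta x y * I"
    by (simp add: inverse_mult_distrib divide_inverse)
  with L_tendsto show ?thesis
    unfolding I_def x_def y_def by (intro exI[of _ L] conjI)
qed

lemma Beta_integral_equal_slopes:
  fixes a b d :: real
  assumes "0 < a" and "0 \<le> b" and "b < d"
  shows "1 / Beta (1 + b / a) (1 + d / a - b / a)
           * integral {0..1} (\<lambda>t. t powr (b / a) * (1 - t) powr (d / a - b / a) / (1 - a / a * t))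
         = Beta (1 + b / a) ((d - b) / a) / Beta (1 + b / a) (1 + (d - b) / a)"
    and "Beta (1 + b / a) ((d - b) / a) / Beta (1 + b / a) (1 + (d - b) / a) = (d + a) / (d - b)"
proof -
  define x where "x = 1 + b / a"
  define w where "w = (d - b) / a"
  have "x > 0" "w > 0"
    using assms by (simp_all add: x_def w_def add_pos_nonneg)
  have "integral {0..1} (\<lambda>t. t powr (b / a) * (1 - t) powr (d / a - b / a) / (1 - a / a * t))
          = integral {0..1} (\<lambda>t. t powr (x - 1) * (1 - t) powr ((w + 1) - 1) / (1 - t))"
    using assms(1) by (simp add: x_def w_def diff_divide_distrib)
  also have "\<dots> = Beta x w"
    using \<open>x > 0\<close> \<open>w > 0\<close> integral_Beta_div_one_minus[of x "w + 1"] by simp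
  finally show "1 / Beta (1 + b / a) (1 + d / a - b / a)
           * integral {0..1} (\<lambda>t. t powr (b / a) * (1 - t) powr (d / a - b / a) / (1 - a / a * t))
         = Beta (1 + b / a) ((d - b) / a) / Beta (1 + b / a) (1 + (d - b) / a)"
    by (simp add: x_def w_def diff_divide_distrib add_diff_eq)
  have "Beta x w / Beta x (1 + w) = (x + w) / w"
    using Beta_div_Beta_plus1_right[OF \<open>x > 0\<close> \<open>w > 0\<close>] by (simp add: add.commute)
  also have "\<dots> = (d + a) / (d - b)"
    using assms by (simp add: x_def w_def field_simps)
  finally show "Beta (1 + b / a) ((d - b) / a) / Beta (1 + b / a) (1 + (d - b) / a) = (d + a) / (d - b)"
    by (simp add: x_def w_def)
qed

theorem claim34:
  fixes a b c d :: int and h1 h2 :: "real \<Rightarrow> real"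
  assumes h1_def: "\<And>x. h1 x = of_int a * x + of_int b"
      and h2_def: "\<And>x. h2 x = of_int c * x + of_int d"
      and "0 < a" and "a \<le> c"
      and "0 \<le> b" and "0 \<le> d"
      and "1 + real_of_int d / real_of_int c > real_of_int b / real_of_int a"
  shows "\<exists>L. (\<lambda>n. cfrac_K (\<lambda>i. - (h1 (real i) * h2 (real i)))
                         (\<lambda>i. h1 (real i) + h2 (real i + 1)) n) \<longlonglongrightarrow> L
     \<and> inverse (L / h2 1 + 1)
         = (1 / Beta (1 + real_of_int b / real_of_int a)
                     (1 + real_of_int d / real_of_int c - real_of_int b / real_of_int a))
           * integral {0..1} (\<lambda>t. t powr (real_of_int b / real_of_int a)
                 * (1 - t) powr (real_of_int d / real_of_int c - real_of_int b / real_of_int a)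
                 / (1 - real_of_int a / real_of_int c * t))
     \<and> (a = c \<and> d > b \<longrightarrow>
          inverse (L / h2 1 + 1)
            = Beta (1 + real_of_int b / real_of_int a) (real_of_int (d - b) / real_of_int a)
              / Beta (1 + real_of_int b / real_of_int a) (1 + real_of_int (d - b) / real_of_int a)
          \<and> Beta (1 + real_of_int b / real_of_int a) (real_of_int (d - b) / real_of_int a)
              / Beta (1 + real_of_int b / real_of_int a) (1 + real_of_int (d - b) / real_of_int a)
            = real_of_int (d + a) / real_of_int (d - b))"
proof -
  obtain L where "(\<lambda>n. cfrac_K (\<lambda>i. - (h1 (real i) * h2 (real i)))
                         (\<lambda>i. h1 (real i) + h2 (real i + 1)) n) \<longlonglongrightarrow> L"
    and "inverse (L / h2 1 + 1)
         = (1 / Beta (1 + real_of_int b / real_of_int a)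
                     (1 + real_of_int d / real_of_int c - real_of_int b / real_of_int a))
           * integral {0..1} (\<lambda>t. t powr (real_of_int b / real_of_int a)
                 * (1 - t) powr (real_of_int d / real_of_int c - real_of_int b / real_of_int a)
                 / (1 - real_of_int a / real_of_int c * t))"
    using linear_cfrac_K_tendsto[where a = "real_of_int a" and b = "real_of_int b"
        and c = "real_of_int c" and d = "real_of_int d"] assms
    by (auto simp: h1_def h2_def)
  then show ?thesis
    using Beta_integral_equal_slopes[of "real_of_int a" "real_of_int b" "real_of_int d"] assms(3,5)
    by (intro exI[of _ L]) auto
qed

end
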